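(* For all integers $q>r\geq 1$, there exists $\alpha\in[0,1]$ such that $f_{q,r}(N)=N^{\alpha+o(1)}$ as $N\to\infty$, i.e. $\log f_{q,r}(N)/\log N\to\alpha$.
   Context: For a $q$-edge-colored complete graph $K$ on vertex set $[N]$ with its natural order, $f_{q,r}(K)$ is the maximum number of vertices of a monotone path (vertices strictly increasing in traversal order) in $K$ whose edges use at most $r$ colors; $f_{q,r}(N)$ is the minimum of $f_{q,r}(K)$ over all such $q$-edge-colored $K$ on $N$ vertices. *)

theory Defs
  imports Complex_Main
begin

text \<open>A q-edge-coloring of the complete graph on [N] = {1..N}: the edge {i,j} with
  i < j gets colour c i j \<in> {0..<q}. (Values of c outside such pairs are irrelevant.)\<close>
definition is_coloring :: "nat \<Rightarrow> nat \<Rightarrow> (nat \<Rightarrow> nat \<Rightarrow> nat) \<Rightarrow> bool" where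
  "is_coloring q N c \<longleftrightarrow> (\<forall>i j. 1 \<le> i \<and> i < j \<and> j \<le> N \<longrightarrow> c i j < q)"

definition monotone_path :: "nat \<Rightarrow> nat list \<Rightarrow> bool" where
  "monotone_path N xs \<longleftrightarrow> sorted_wrt (<) xs \<and> set xs \<subseteq> {1..N}"

definition path_colors :: "(nat \<Rightarrow> nat \<Rightarrow> nat) \<Rightarrow> nat list \<Rightarrow> nat set" where
  "path_colors c xs = {c (xs ! k) (xs ! Suc k) | k. Suc k < length xs}"

definition f_col :: "nat \<Rightarrow> nat \<Rightarrow> (nat \<Rightarrow> nat \<Rightarrow> nat) \<Rightarrow> nat" where
  "f_col r N c = Max {length xs | xs. monotone_path N xs \<and> card (path_colors c xs) \<le> r}"

definition f_qr :: "nat \<Rightarrow> nat \<Rightarrow> nat \<Rightarrow> nat" where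
  "f_qr q r N = Min {f_col r N c | c. is_coloring q N c}"

end

theory Submission
  imports Defs
begin

text \<open>Cut [a * b] into a consecutive blocks of length b and colour an edge inside a block by a
  colouring of K_b and an edge between two blocks by a colouring of K_a. A monotone path with at
  most r colours then meets at most f(a) blocks (its sequence of blocks is such a path in K_a) and
  contains at most f(b) vertices of each block (its stretch inside a block is such a path in K_b),
  so f(a b) \<le> f(a) f(b). By this submultiplicativity, monotonicity in N and 1 \<le> f(N), the ratio
  log f(N) / log N converges to its infimum: bracketing m^k \<le> N < m^(k+1) gives
  log f(N) / log N \<le> (1 + 1/k) log f(m) / log m.\<close>

lemma path_colors_eq_set_map2: "path_colors c xs = set (map2 c xs (tl xs))"
proof -
  have "set (map2 c xs (tl xs)) = (\<lambda>k. c (xs ! k) (xs ! Suc k)) ` {k. Suc k < length xs}"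
    unfolding set_map set_zip by (auto simp: nth_tl image_iff intro!: exI)
  then show ?thesis
    by (auto simp: path_colors_def)
qed

lemma path_colors_Nil [simp]: "path_colors c [] = {}"
  and path_colors_singleton [simp]: "path_colors c [x] = {}"
  and path_colors_Cons_Cons [simp]:
    "path_colors c (x # y # zs) = insert (c x y) (path_colors c (y # zs))"
  by (simp_all add: path_colors_eq_set_map2)

lemma finite_path_colors [simp]: "finite (path_colors c xs)"
  by (simp add: path_colors_eq_set_map2)

lemma path_colors_Cons:
  "path_colors c (x # xs) = (if xs = [] then {} else insert (c x (hd xs)) (path_colors c xs))"
  by (cases xs) auto

lemma path_colors_Cons_subset: "path_colors c xs \<subseteq> path_colors c (x # xs)"
  by (cases xs) auto

lemma path_colors_infix_subset: "path_colors c ys \<subseteq> path_colors c (xs @ ys @ zs)"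
proof -
  have "path_colors c ys \<subseteq> path_colors c (ys @ zs)"
    by (induction ys rule: induct_list012) auto
  also have "\<dots> \<subseteq> path_colors c (xs @ ys @ zs)"
    by (induction xs) (auto intro: subsetD[OF path_colors_Cons_subset])
  finally show ?thesis .
qed

lemma path_colors_map:
  assumes "\<And>u v. u \<in> set xs \<Longrightarrow> v \<in> set xs \<Longrightarrow> d (g u) (g v) = c u v"
  shows "path_colors d (map g xs) = path_colors c xs"
  using assms by (induction xs rule: induct_list012) auto

lemma path_colors_remdups_adj_map_subset:
  assumes "\<And>u v. g u \<noteq> g v \<Longrightarrow> d (g u) (g v) = c u v"
  shows "path_colors d (remdups_adj (map g xs)) \<subseteq> path_colors c xs"
proof (induction xs rule: induct_list012)
  case (3 x y zs)
  show ?case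
  proof (cases "g x = g y")
    case True
    then show ?thesis
      using "3.IH"(2) path_colors_Cons_subset[of c "y # zs" x] by auto
  next
    case False
    then show ?thesis
      using "3.IH"(2) assms[OF False] by (auto simp: path_colors_Cons)
  qed
qed simp_all

lemma sorted_wrt_less_remdups_adj: "sorted xs \<Longrightarrow> sorted_wrt (<) (remdups_adj xs)"
  by (induction xs rule: remdups_adj.induct) (auto simp: less_le)

lemma sorted_map_split_filter:
  fixes g :: "'a \<Rightarrow> 'b::linorder"
  assumes "sorted (map g xs)"
  shows "xs = filter (\<lambda>v. g v < k) xs @ filter (\<lambda>v. g v = k) xs @ filter (\<lambda>v. k < g v) xs"
  using assms
proof (induction xs)
  case (Cons x xs)
  then have split: "xs = filter (\<lambda>v. g v < k) xs @ filter (\<lambda>v. g v = k) xs @ filter (\<lambda>v. k < g v) xs"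
    and above: "\<forall>y\<in>set xs. g x \<le> g y"
    by auto
  consider "g x < k" | "g x = k" | "k < g x"
    by (rule linorder_cases)
  then show ?case
  proof cases
    case 2
    then have "filter (\<lambda>v. g v < k) xs = []"
      using above by (auto simp: filter_empty_conv)
    then show ?thesis using split 2 by simp
  next
    case 3
    then have "filter (\<lambda>v. g v < k) xs = []" "filter (\<lambda>v. g v = k) xs = []"
      using above by (fastforce simp: filter_empty_conv)+
    then show ?thesis using split 3 by auto
  qed (use split in auto)
qed simp

lemma length_le_card_image_mult:
  assumes "distinct xs" and "\<And>k. length (filter (\<lambda>u. g u = k) xs) \<le> B"
  shows "length xs \<le> card (g ` set xs) * B"
proof -
  have "length xs = card (set xs)"
    using assms(1) by (simp add: distinct_card)
  also have "set xs = (\<Union>k\<in>g ` set xs. set (filter (\<lambda>u. g u = k) xs))"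
    by auto
  also have "card \<dots> \<le> (\<Sum>k\<in>g ` set xs. card (set (filter (\<lambda>u. g u = k) xs)))"
    by (rule card_UN_le) simp
  also have "\<dots> \<le> (\<Sum>k\<in>g ` set xs. B)"
    by (intro sum_mono order_trans[OF card_length assms(2)])
  finally show ?thesis by simp
qed

lemma length_le_if_monotone_path:
  assumes "monotone_path N xs"
  shows "length xs \<le> N"
proof -
  have "distinct xs" and "set xs \<subseteq> {1..N}"
    using assms by (simp_all add: monotone_path_def strict_sorted_iff)
  then have "card (set xs) \<le> card {1..N}"
    by (intro card_mono) simp_all
  then show ?thesis
    using \<open>distinct xs\<close> by (simp add: distinct_card)
qed

lemma finite_monotone_path_lengths:
  "finite {length xs | xs. monotone_path N xs \<and> card (path_colors c xs) \<le> r}"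
  by (rule finite_subset[of _ "{..N}"]) (auto dest: length_le_if_monotone_path)

lemma length_le_f_col:
  "monotone_path N xs \<Longrightarrow> card (path_colors c xs) \<le> r \<Longrightarrow> length xs \<le> f_col r N c"
  unfolding f_col_def by (rule Max_ge[OF finite_monotone_path_lengths]) auto

lemma length_le_f_col_if_path_colors_subset:
  assumes "monotone_path N ys" and "path_colors d ys \<subseteq> path_colors c xs"
    and "card (path_colors c xs) \<le> r"
  shows "length ys \<le> f_col r N d"
proof (rule length_le_f_col[OF assms(1)])
  have "card (path_colors d ys) \<le> card (path_colors c xs)"
    using assms(2) by (simp add: card_mono)
  then show "card (path_colors d ys) \<le> r"
    using assms(3) by simp
qed

lemma f_col_le:
  assumes "\<And>xs. monotone_path N xs \<Longrightarrow> card (path_colors c xs) \<le> r \<Longrightarrow> length xs \<le> M"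
  shows "f_col r N c \<le> M"
proof -
  have "monotone_path N []"
    by (simp add: monotone_path_def)
  then show ?thesis
    unfolding f_col_def using assms by (subst Max_le_iff[OF finite_monotone_path_lengths]) auto
qed

lemma f_col_le_N: "f_col r N c \<le> N"
  by (rule f_col_le) (rule length_le_if_monotone_path)

lemma f_col_pos: "1 \<le> N \<Longrightarrow> 1 \<le> f_col r N c"
  using length_le_f_col[of N "[1]" c r] by (simp add: monotone_path_def)

lemma f_col_mono: "M \<le> N \<Longrightarrow> f_col r M c \<le> f_col r N c"
  by (rule f_col_le, rule length_le_f_col) (auto simp: monotone_path_def)

lemma is_coloring_mono: "is_coloring q N c \<Longrightarrow> M \<le> N \<Longrightarrow> is_coloring q M c"
  by (auto simp: is_coloring_def)

lemma finite_f_col_values: "finite {f_col r N c | c. is_coloring q N c}"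
  by (rule finite_subset[of _ "{..N}"]) (auto simp: f_col_le_N)

lemma f_qr_attained:
  assumes "0 < q"
  obtains c where "is_coloring q N c" and "f_qr q r N = f_col r N c"
proof -
  have "is_coloring q N (\<lambda>_ _. 0)"
    using assms by (simp add: is_coloring_def)
  then have "f_qr q r N \<in> {f_col r N c | c. is_coloring q N c}"
    unfolding f_qr_def by (intro Min_in finite_f_col_values) auto
  then show thesis using that by blast
qed

lemma f_qr_le_f_col: "is_coloring q N c \<Longrightarrow> f_qr q r N \<le> f_col r N c"
  unfolding f_qr_def by (rule Min_le[OF finite_f_col_values]) auto

lemma f_qr_pos:
  assumes "0 < q" and "1 \<le> N"
  shows "1 \<le> f_qr q r N"
proof -
  obtain c where "f_qr q r N = f_col r N c"
    using f_qr_attained[OF assms(1)] .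
  then show ?thesis
    using f_col_pos[OF assms(2)] by simp
qed

lemma f_qr_le_N:
  assumes "0 < q"
  shows "f_qr q r N \<le> N"
proof -
  obtain c where "f_qr q r N = f_col r N c"
    using f_qr_attained[OF assms] .
  then show ?thesis
    using f_col_le_N by simp
qed

lemma mono_f_qr:
  assumes "0 < q"
  shows "mono (f_qr q r)"
proof
  fix M N :: nat
  assume "M \<le> N"
  obtain c where c: "is_coloring q N c" "f_qr q r N = f_col r N c"
    using f_qr_attained[OF assms] .
  have "f_qr q r M \<le> f_col r M c"
    using is_coloring_mono[OF c(1) \<open>M \<le> N\<close>] by (rule f_qr_le_f_col)
  also have "\<dots> \<le> f_col r N c"
    using \<open>M \<le> N\<close> by (rule f_col_mono)
  finally show "f_qr q r M \<le> f_qr q r N"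
    using c(2) by simp
qed

definition block :: "nat \<Rightarrow> nat \<Rightarrow> nat" where
  "block b u = (u - 1) div b + 1"

definition offset :: "nat \<Rightarrow> nat \<Rightarrow> nat" where
  "offset b u = (u - 1) mod b + 1"

definition product_coloring ::
    "nat \<Rightarrow> (nat \<Rightarrow> nat \<Rightarrow> nat) \<Rightarrow> (nat \<Rightarrow> nat \<Rightarrow> nat) \<Rightarrow> nat \<Rightarrow> nat \<Rightarrow> nat" where
  "product_coloring b c1 c2 u v =
    (if block b u = block b v then c2 (offset b u) (offset b v) else c1 (block b u) (block b v))"

lemma block_mono: "u \<le> v \<Longrightarrow> block b u \<le> block b v"
  unfolding block_def by (simp add: div_le_mono)

lemma block_bounds: "1 \<le> u \<Longrightarrow> u \<le> a * b \<Longrightarrow> 1 \<le> block b u \<and> block b u \<le> a"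
  unfolding block_def by (simp add: less_mult_imp_div_less Suc_le_eq)

lemma sorted_map_block: "sorted_wrt (<) xs \<Longrightarrow> sorted (map (block b) xs)"
  unfolding sorted_map by (rule sorted_wrt_mono_rel[of _ "(<)"]) (simp_all add: block_mono)

lemma offset_bounds: "0 < b \<Longrightarrow> 1 \<le> offset b u \<and> offset b u \<le> b"
  unfolding offset_def by (simp add: Suc_le_eq)

lemma offset_less:
  assumes "1 \<le> u" and "u < v" and "block b u = block b v"
  shows "offset b u < offset b v"
proof -
  have same_div: "(u - 1) div b = (v - 1) div b"
    using assms(3) by (simp add: block_def)
  have "u - 1 = b * ((u - 1) div b) + (u - 1) mod b" "v - 1 = b * ((u - 1) div b) + (v - 1) mod b"
    by (metis mult_div_mod_eq, metis mult_div_mod_eq same_div)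
  then have "(u - 1) mod b < (v - 1) mod b"
    using assms(1,2) by linarith
  then show ?thesis
    by (simp add: offset_def)
qed

lemma is_coloring_product_coloring:
  assumes "0 < b" and "is_coloring q a c1" and "is_coloring q b c2"
  shows "is_coloring q (a * b) (product_coloring b c1 c2)"
  unfolding is_coloring_def
proof (intro allI impI)
  fix u v
  assume uv: "1 \<le> u \<and> u < v \<and> v \<le> a * b"
  show "product_coloring b c1 c2 u v < q"
  proof (cases "block b u = block b v")
    case True
    then show ?thesis
      using uv offset_less[of u v b] offset_bounds[OF assms(1)] assms(3)
      by (simp add: product_coloring_def is_coloring_def)
  next
    case False
    then have "block b u < block b v"
      using block_mono[of u v b] uv by simp
    then show ?thesis
      using False uv block_bounds[of u a b] block_bounds[of v a b] assms(2)
      by (simp add: product_coloring_def is_coloring_def)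
  qed
qed

lemma card_blocks_le_f_col:
  assumes "monotone_path (a * b) xs"
    and "card (path_colors (product_coloring b c1 c2) xs) \<le> r"
  shows "card (block b ` set xs) \<le> f_col r a c1"
proof -
  define ys where "ys = remdups_adj (map (block b) xs)"
  have "sorted (map (block b) xs)"
    using assms(1) by (simp add: monotone_path_def sorted_map_block)
  then have "monotone_path a ys"
    using assms(1) block_bounds[of _ a b]
    by (auto simp: ys_def monotone_path_def sorted_wrt_less_remdups_adj)
  moreover have "path_colors c1 ys \<subseteq> path_colors (product_coloring b c1 c2) xs"
    unfolding ys_def by (rule path_colors_remdups_adj_map_subset) (simp add: product_coloring_def)
  ultimately have "length ys \<le> f_col r a c1"
    using assms(2) by (rule length_le_f_col_if_path_colors_subset)
  then show ?thesis
    using card_length[of ys] by (simp add: ys_def)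
qed

lemma length_block_fibre_le_f_col:
  assumes "0 < b" and "monotone_path (a * b) xs"
    and "card (path_colors (product_coloring b c1 c2) xs) \<le> r"
  shows "length (filter (\<lambda>u. block b u = k) xs) \<le> f_col r b c2"
proof -
  define zs where "zs = filter (\<lambda>u. block b u = k) xs"
  have sorted_xs: "sorted_wrt (<) xs" and xs_range: "set xs \<subseteq> {1..a * b}"
    using assms(2) by (auto simp: monotone_path_def)
  have zs_in_block: "\<forall>u\<in>set zs. u \<in> set xs \<and> block b u = k"
    by (simp add: zs_def)
  have "sorted_wrt (<) zs"
    unfolding zs_def by (rule sorted_wrt_filter[OF sorted_xs])
  then have "sorted_wrt (<) (map (offset b) zs)"
    unfolding sorted_wrt_map
  proof (rule sorted_wrt_mono_rel[rotated])
    fix u v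
    assume "u \<in> set zs" "v \<in> set zs" "u < v"
    then show "offset b u < offset b v"
      using zs_in_block xs_range by (intro offset_less) auto
  qed
  then have "monotone_path b (map (offset b) zs)"
    using offset_bounds[OF assms(1)] by (auto simp: monotone_path_def)
  moreover have "path_colors c2 (map (offset b) zs) \<subseteq> path_colors (product_coloring b c1 c2) xs"
  proof -
    have "path_colors c2 (map (offset b) zs) = path_colors (product_coloring b c1 c2) zs"
      by (rule path_colors_map) (use zs_in_block in \<open>simp add: product_coloring_def\<close>)
    moreover have "xs = filter (\<lambda>u. block b u < k) xs @ zs @ filter (\<lambda>u. k < block b u) xs"
      unfolding zs_def by (rule sorted_map_split_filter[OF sorted_map_block[OF sorted_xs]])
    ultimately show ?thesis
      by (metis path_colors_infix_subset)
  qed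
  ultimately have "length (map (offset b) zs) \<le> f_col r b c2"
    using assms(3) by (rule length_le_f_col_if_path_colors_subset)
  then show ?thesis
    by (simp add: zs_def)
qed

lemma f_col_product_coloring_le:
  assumes "0 < b"
  shows "f_col r (a * b) (product_coloring b c1 c2) \<le> f_col r a c1 * f_col r b c2"
proof (rule f_col_le)
  fix xs
  assume xs: "monotone_path (a * b) xs" "card (path_colors (product_coloring b c1 c2) xs) \<le> r"
  then have "distinct xs"
    by (simp add: monotone_path_def strict_sorted_iff)
  then have "length xs \<le> card (block b ` set xs) * f_col r b c2"
    by (rule length_le_card_image_mult) (rule length_block_fibre_le_f_col[OF assms xs])
  also have "\<dots> \<le> f_col r a c1 * f_col r b c2"
    using card_blocks_le_f_col[OF xs] by simp
  finally show "length xs \<le> f_col r a c1 * f_col r b c2" .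
qed

lemma f_qr_mult_le:
  assumes "0 < q" and "0 < b"
  shows "f_qr q r (a * b) \<le> f_qr q r a * f_qr q r b"
proof -
  obtain c1 where c1: "is_coloring q a c1" "f_qr q r a = f_col r a c1"
    using f_qr_attained[OF assms(1)] .
  obtain c2 where c2: "is_coloring q b c2" "f_qr q r b = f_col r b c2"
    using f_qr_attained[OF assms(1)] .
  have "f_qr q r (a * b) \<le> f_col r (a * b) (product_coloring b c1 c2)"
    using assms(2) c1(1) c2(1) by (intro f_qr_le_f_col is_coloring_product_coloring)
  also have "\<dots> \<le> f_col r a c1 * f_col r b c2"
    using assms(2) by (rule f_col_product_coloring_le)
  finally show ?thesis
    using c1(2) c2(2) by simp
qed

lemma submultiplicative_power_le:
  fixes f :: "nat \<Rightarrow> nat"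
  assumes submult: "\<And>a b. 1 \<le> a \<Longrightarrow> 1 \<le> b \<Longrightarrow> f (a * b) \<le> f a * f b" and "1 \<le> m"
  shows "f (m ^ Suc k) \<le> f m ^ Suc k"
proof (induction k)
  case (Suc k)
  have "f (m ^ Suc (Suc k)) \<le> f m * f (m ^ Suc k)"
    using assms(2) by (simp add: submult)
  also have "\<dots> \<le> f m * f m ^ Suc k"
    using Suc.IH by simp
  finally show ?case
    by simp
qed simp

lemma log_ratio_le_of_power_bracket:
  fixes f :: "nat \<Rightarrow> nat"
  assumes "mono f" and pos: "\<And>N. 1 \<le> N \<Longrightarrow> 1 \<le> f N"
    and submult: "\<And>a b. 1 \<le> a \<Longrightarrow> 1 \<le> b \<Longrightarrow> f (a * b) \<le> f a * f b"
    and m: "2 \<le> m" and k: "1 \<le> k" and bracket: "m ^ k \<le> N" "N < m ^ Suc k"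
  shows "ln (f N) / ln N \<le> (1 + 1 / k) * (ln (f m) / ln m)"
proof -
  have "0 < m ^ k"
    using m by simp
  then have "1 \<le> N"
    using bracket(1) by linarith
  have "f N \<le> f (m ^ Suc k)"
    using \<open>mono f\<close> bracket(2) by (simp add: monoD)
  also have "\<dots> \<le> f m ^ Suc k"
    using submult m by (intro submultiplicative_power_le) auto
  finally have "real (f N) \<le> real (f m) ^ Suc k"
    by (metis of_nat_le_iff of_nat_power)
  then have "ln (f N) \<le> ln (real (f m) ^ Suc k)"
    using pos[OF \<open>1 \<le> N\<close>] by (intro ln_mono) simp_all
  then have upper: "ln (f N) \<le> Suc k * ln (f m)"
    by (simp add: ln_realpow del: power_Suc)
  have "real m ^ k \<le> real N"
    using bracket(1) by (metis of_nat_le_iff of_nat_power)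
  then have "ln (real m ^ k) \<le> ln N"
    using m by (intro ln_mono) simp_all
  then have lower: "k * ln m \<le> ln N"
    by (simp add: ln_realpow)
  have "0 \<le> ln (f m)" "0 < ln m"
    using pos[of m] m by simp_all
  then have "ln (f N) / ln N \<le> Suc k * ln (f m) / (k * ln m)"
    using upper lower k by (intro frac_le) simp_all
  also have "\<dots> = (1 + 1 / k) * (ln (f m) / ln m)"
    using k by (simp add: field_simps)
  finally show ?thesis .
qed

lemma log_ratio_le_beyond_power:
  fixes f :: "nat \<Rightarrow> nat"
  assumes "mono f" and pos: "\<And>N. 1 \<le> N \<Longrightarrow> 1 \<le> f N"
    and submult: "\<And>a b. 1 \<le> a \<Longrightarrow> 1 \<le> b \<Longrightarrow> f (a * b) \<le> f a * f b"
    and m: "2 \<le> m" and K: "1 \<le> K" and N: "m ^ K \<le> N"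
  shows "ln (f N) / ln N \<le> (1 + 1 / K) * (ln (f m) / ln m)"
proof -
  have "0 < m ^ K"
    using m by simp
  then have "1 \<le> N"
    using N by linarith
  then obtain k where k: "m ^ k \<le> N" "N < m ^ Suc k"
    using ex_power_ivl1[OF m] by auto
  have "K \<le> k"
  proof (rule ccontr)
    assume "\<not> K \<le> k"
    then have "m ^ Suc k \<le> m ^ K"
      using m by (intro power_increasing) auto
    then show False
      using k N by linarith
  qed
  have "ln (f N) / ln N \<le> (1 + 1 / k) * (ln (f m) / ln m)"
    using \<open>K \<le> k\<close> K m k by (intro log_ratio_le_of_power_bracket[OF assms(1-3)]) auto
  also have "\<dots> \<le> (1 + 1 / K) * (ln (f m) / ln m)"
  proof (rule mult_right_mono)
    show "1 + 1 / real k \<le> 1 + 1 / real K"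
      using \<open>K \<le> k\<close> K by (simp add: frac_le)
    show "0 \<le> ln (f m) / ln m"
      using pos[of m] m by simp
  qed
  finally show ?thesis .
qed

lemma log_ratio_tendsto_Inf:
  fixes f :: "nat \<Rightarrow> nat"
  assumes "mono f" and pos: "\<And>N. 1 \<le> N \<Longrightarrow> 1 \<le> f N"
    and submult: "\<And>a b. 1 \<le> a \<Longrightarrow> 1 \<le> b \<Longrightarrow> f (a * b) \<le> f a * f b"
  shows "(\<lambda>N. ln (f N) / ln N) \<longlonglongrightarrow> (INF N\<in>{2..}. ln (f N) / ln N)"
proof -
  define \<rho> where "\<rho> N = ln (real (f N)) / ln (real N)" for N
  have \<rho>_nonneg: "0 \<le> \<rho> N" if "2 \<le> N" for N
    using pos[of N] that by (simp add: \<rho>_def)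
  then have bdd: "bdd_below (\<rho> ` {2..})"
    by (intro bdd_belowI2[of _ 0]) simp
  have "\<rho> \<longlonglongrightarrow> (INF N\<in>{2..}. \<rho> N)"
  proof (rule order_tendstoI)
    fix a
    assume a: "a < (INF N\<in>{2..}. \<rho> N)"
    show "eventually (\<lambda>N. a < \<rho> N) sequentially"
      using eventually_ge_at_top[of "2 :: nat"]
      by eventually_elim (use a cINF_lower[OF bdd] in force)
  next
    fix a
    assume "(INF N\<in>{2..}. \<rho> N) < a"
    then obtain m where m: "2 \<le> m" "\<rho> m < a"
      using cINF_less_iff[OF _ bdd] by auto
    have "(\<lambda>K. (1 + 1 / real K) * \<rho> m) \<longlonglongrightarrow> (1 + 0) * \<rho> m"
      by (intro tendsto_intros)
    then have "eventually (\<lambda>K. (1 + 1 / real K) * \<rho> m < a) sequentially"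
      using m(2) by (intro order_tendstoD(2)) simp_all
    then obtain K0 where K0: "\<forall>K\<ge>K0. (1 + 1 / real K) * \<rho> m < a"
      unfolding eventually_sequentially by blast
    define K where "K = Suc K0"
    have K: "1 \<le> K" "(1 + 1 / real K) * \<rho> m < a"
      unfolding K_def using K0[rule_format, of "Suc K0"] by simp_all
    have "\<rho> N < a" if "m ^ K \<le> N" for N
    proof -
      have "\<rho> N \<le> (1 + 1 / K) * \<rho> m"
        unfolding \<rho>_def by (rule log_ratio_le_beyond_power[OF assms m(1) K(1) that])
      then show ?thesis
        using K(2) by simp
    qed
    then show "eventually (\<lambda>N. \<rho> N < a) sequentially"
      unfolding eventually_sequentially by blast
  qed
  then show ?thesis
    unfolding \<rho>_def .
qed

lemma ln_ratio_bounds: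
  fixes n N :: nat
  assumes "1 \<le> n" and "n \<le> N"
  shows "0 \<le> ln n / ln N \<and> ln n / ln N \<le> 1"
  using assms by (auto intro!: divide_nonneg_nonneg simp: divide_le_eq_1)

theorem proposition3p5:
  fixes q r :: nat
  assumes "1 \<le> r" and "r < q"
  shows "\<exists>\<alpha>::real. 0 \<le> \<alpha> \<and> \<alpha> \<le> 1 \<and>
           ((\<lambda>N. ln (real (f_qr q r N)) / ln (real N)) \<longlongrightarrow> \<alpha>) sequentially"
proof -
  have q: "0 < q"
    using assms by simp
  let ?\<rho> = "\<lambda>N. ln (real (f_qr q r N)) / ln (real N)"
  have lim: "?\<rho> \<longlonglongrightarrow> (INF N\<in>{2..}. ?\<rho> N)"
    using q by (intro log_ratio_tendsto_Inf mono_f_qr f_qr_pos f_qr_mult_le) simp_all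
  have "eventually (\<lambda>N. 0 \<le> ?\<rho> N \<and> ?\<rho> N \<le> 1) sequentially"
    using eventually_ge_at_top[of "1 :: nat"]
    by eventually_elim (use q in \<open>intro ln_ratio_bounds f_qr_pos f_qr_le_N\<close>)
  then have "0 \<le> (INF N\<in>{2..}. ?\<rho> N)" "(INF N\<in>{2..}. ?\<rho> N) \<le> 1"
    using lim by (auto intro: tendsto_lowerbound tendsto_upperbound elim: eventually_mono)
  then show ?thesis
    using lim by blast
qed

end
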